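(* Let $\delta>0$ and let $K=\{(k,b):k\in[k_-,k_+],\ b\in[b_-,b_+]\}$ with $0<k_-\le k_+$ and $\delta<b_-\le b_+$. For $\lambda$ in some index set, let $\nu(\lambda,dx)=\sum_{m=1}^M\pi_m(\lambda)\Gamma(k_m,b_m)(dx)$ and $\hat\nu(\lambda,dx)=\sum_{m=1}^M\hat\pi_m(\lambda)\Gamma(\hat k_m,\hat b_m)(dx)$, where $(\pi_m(\lambda))_m$ and $(\hat\pi_m(\lambda))_m$ are probability vectors and all $(k_m,b_m),(\hat k_m,\hat b_m)\in K$. Then there exist constants $C_k,C_b<\infty$ depending only on $(k_\pm,b_\pm,\delta)$ such that for each $\lambda$, $$\|\nu(\lambda,\cdot)-\hat\nu(\lambda,\cdot)\|_{TV,\delta}\le\sum_{m=1}^M|\pi_m(\lambda)-\hat\pi_m(\lambda)|\,M_{k_m,b_m}(\delta)+\sum_{m=1}^M\hat\pi_m(\lambda)\big(C_k|k_m-\hat k_m|+C_b|b_m-\hat b_m|\big),$$ where $M_{k,b}(\delta)=\big(\tfrac{b}{b-\delta}\big)^k$.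
   Context: $\Gamma(k,b)(dx)=f_{k,b}(x)dx$ with $f_{k,b}(x)=\frac{b^k}{\Gamma(k)}x^{k-1}e^{-bx}$ on $(0,\infty)$. For a finite signed measure $\sigma$ on $\mathbb R_+$, $\|\sigma\|_{TV,\delta}=\int_0^\infty e^{\delta x}|\sigma|(dx)$ with $|\sigma|$ the total variation measure. *)

theory Defs
  imports "HOL-Analysis.Analysis"
begin

definition gamma_dens :: "real \<Rightarrow> real \<Rightarrow> real \<Rightarrow> real" where
  "gamma_dens k b x = (if 0 < x then b powr k / Gamma k * x powr (k - 1) * exp (- b * x) else 0)"

definition gamma_mix_dens :: "nat \<Rightarrow> (nat \<Rightarrow> real) \<Rightarrow> (nat \<Rightarrow> real) \<Rightarrow> (nat \<Rightarrow> real) \<Rightarrow> real \<Rightarrow> real" where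
  "gamma_mix_dens M w k b x = (\<Sum>m=1..M. w m * gamma_dens (k m) (b m) x)"

text \<open>Weighted total variation norm of the signed measure (p - q) dx on R_+, for
  absolutely continuous measures with densities p, q: the total variation measure
  of (p - q) dx is |p - q| dx.\<close>
definition weighted_tv_dens :: "real \<Rightarrow> (real \<Rightarrow> real) \<Rightarrow> (real \<Rightarrow> real) \<Rightarrow> ennreal" where
  "weighted_tv_dens \<delta> p q = (\<integral>\<^sup>+ x\<in>{0..}. ennreal (exp (\<delta> * x) * \<bar>p x - q x\<bar>) \<partial>lborel)"

definition gamma_mgf_bound :: "real \<Rightarrow> real \<Rightarrow> real \<Rightarrow> real" where
  "gamma_mgf_bound k b \<delta> = (b / (b - \<delta>)) powr k"

end

theory Submission
  imports Defs
begin

(* Multiplying by e^(delta x) turns the Gamma(k, b) density f_{k,b} into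
   b^k / Gamma(k) x^(k-1) e^(-(b - delta) x), a Gamma integral of total mass M_{k,b}(delta).
   The difference e^(delta x) (nu - nu^) splits into sum (pi_m - pi^_m) e^(delta x) f_{k_m,b_m},
   which gives the first sum of the bound, and sum pi^_m e^(delta x) (f_{k_m,b_m} - f_{k^_m,b^_m}).
   The derivatives of f_{k,b}(x) in k and b are f_{k,b}(x) (ln b + ln x - digamma k) and
   f_{k,b}(x) (k/b - x). Absorbing |ln x| <= x^(-s)/s + x with s = k_-/2, both are bounded on the
   compact parameter box by L (x^(k_-/2 - 1) + x^(k_+)) e^(-b_- x), so by the mean value theorem
   f is Lipschitz in (k, b) with this weight. Since b_- > delta, the weight times e^(delta x) has
   finite integral, and that integral serves as C_k = C_b. *)

lemma nn_integral_powr_exp: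
  fixes a c :: real
  assumes a: "0 < a" and c: "0 < c"
  shows "(\<integral>\<^sup>+x\<in>{0..}. ennreal (x powr (a - 1) * exp (- c * x)) \<partial>lborel) = ennreal (Gamma a / c powr a)"
proof -
  let ?f = "\<lambda>t::real. ennreal (indicator {0..} t * t powr (a - 1) / exp t)"
  have scaled: "?f (c * x)
      = ennreal (c powr (a - 1)) * (ennreal (x powr (a - 1) * exp (- c * x)) * indicator {0..} x)" for x
    using c by (cases "0 \<le> x")
      (auto simp: powr_mult exp_minus indicator_def ennreal_mult[symmetric] divide_inverse
        mult.assoc zero_le_mult_iff)
  have "ennreal (Gamma a) = (\<integral>\<^sup>+t. ?f t \<partial>lborel)"
    using Gamma_conv_nn_integral_real[OF a] by simp
  also have "\<dots> = ennreal c * (\<integral>\<^sup>+x. ?f (c * x) \<partial>lborel)"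
    using nn_integral_real_affine[of ?f c 0] c by simp
  also have "\<dots> = ennreal (c * c powr (a - 1))
      * (\<integral>\<^sup>+x\<in>{0..}. ennreal (x powr (a - 1) * exp (- c * x)) \<partial>lborel)"
    unfolding scaled using c by (simp add: nn_integral_cmult ennreal_mult mult.assoc)
  also have "c * c powr (a - 1) = c powr a"
    using c by (simp add: powr_diff)
  finally have "ennreal (Gamma a)
      = (\<integral>\<^sup>+x\<in>{0..}. ennreal (x powr (a - 1) * exp (- c * x)) \<partial>lborel) * ennreal (c powr a)"
    by (simp add: mult.commute)
  then show ?thesis
    using a c by (simp add: divide_ennreal[symmetric] mult_divide_eq_ennreal)
qed

lemma nn_integral_powr_add_powr_exp:
  fixes a c e :: real
  assumes "0 < a" "0 < c" "0 < e"
  shows "(\<integral>\<^sup>+x\<in>{0..}. ennreal ((x powr (a - 1) + x powr (c - 1)) * exp (- e * x)) \<partial>lborel)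
    = ennreal (Gamma a / e powr a + Gamma c / e powr c)"
proof -
  have "ennreal ((x powr (a - 1) + x powr (c - 1)) * exp (- e * x)) * indicator {0..} x
      = ennreal (x powr (a - 1) * exp (- e * x)) * indicator {0..} x
        + ennreal (x powr (c - 1) * exp (- e * x)) * indicator {0..} x" for x
    by (simp add: distrib_right ennreal_plus)
  then have "(\<integral>\<^sup>+x\<in>{0..}. ennreal ((x powr (a - 1) + x powr (c - 1)) * exp (- e * x)) \<partial>lborel)
      = (\<integral>\<^sup>+x\<in>{0..}. ennreal (x powr (a - 1) * exp (- e * x)) \<partial>lborel)
        + (\<integral>\<^sup>+x\<in>{0..}. ennreal (x powr (c - 1) * exp (- e * x)) \<partial>lborel)"
    by (simp add: nn_integral_add)
  also have "\<dots> = ennreal (Gamma a / e powr a + Gamma c / e powr c)"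
    using nn_integral_powr_exp[of a e] nn_integral_powr_exp[of c e] assms
    by (simp add: ennreal_plus)
  finally show ?thesis .
qed

lemma abs_ln_le_powr:
  fixes x s :: real
  assumes x: "0 < x" and s: "0 < s"
  shows "\<bar>ln x\<bar> \<le> x powr (- s) / s + x"
proof (cases "1 \<le> x")
  case True
  moreover have "0 \<le> x powr (- s) / s"
    using s by simp
  ultimately show ?thesis
    using ln_le_minus_one[OF x] by simp
next
  case False
  have "- s * ln x = ln (x powr (- s))"
    using x by (simp add: ln_powr)
  also have "\<dots> \<le> x powr (- s)"
    using x ln_le_minus_one[of "x powr (- s)"] by simp
  finally have "- ln x \<le> x powr (- s) / s"
    using s by (simp add: field_simps)
  then show ?thesis
    using False x by simp
qed

lemma powr_le_powr_add:
  fixes x :: real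
  assumes "0 < x" "a \<le> t" "t \<le> c"
  shows "x powr t \<le> x powr a + x powr c"
proof (cases "x \<le> 1")
  case True
  then have "x powr t \<le> x powr a"
    using assms by (intro powr_mono') auto
  then show ?thesis
    by (simp add: add_increasing2)
next
  case False
  then have "x powr t \<le> x powr c"
    using assms by (intro powr_mono) auto
  then show ?thesis
    by (simp add: add_increasing)
qed

lemma gamma_dens_nonneg: "0 < k \<Longrightarrow> 0 \<le> gamma_dens k b x"
  by (simp add: gamma_dens_def)

lemma borel_measurable_gamma_dens [measurable]: "gamma_dens k b \<in> borel_measurable borel"
  unfolding gamma_dens_def by measurable

lemma nn_integral_exp_gamma_dens:
  assumes k: "0 < k" and "0 < b" "d < b"
  shows "(\<integral>\<^sup>+x. ennreal (exp (d * x) * gamma_dens k b x) \<partial>lborel) = ennreal (gamma_mgf_bound k b d)"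
proof -
  have b: "0 < b - d" "0 < b"
    using assms by auto
  have "ennreal (exp (d * x) * gamma_dens k b x)
      = ennreal (b powr k / Gamma k) * (ennreal (x powr (k - 1) * exp (- (b - d) * x)) * indicator {0..} x)"
    for x
    using k by (cases "0 < x")
      (auto simp: gamma_dens_def indicator_def exp_diff exp_minus ennreal_mult[symmetric] field_simps)
  then have "(\<integral>\<^sup>+x. ennreal (exp (d * x) * gamma_dens k b x) \<partial>lborel)
      = ennreal (b powr k / Gamma k) * (\<integral>\<^sup>+x\<in>{0..}. ennreal (x powr (k - 1) * exp (- (b - d) * x)) \<partial>lborel)"
    by (simp add: nn_integral_cmult)
  also have "\<dots> = ennreal (b powr k / Gamma k * (Gamma k / (b - d) powr k))"
    using nn_integral_powr_exp[OF k b(1)] k b by (simp add: ennreal_mult[symmetric])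
  also have "b powr k / Gamma k * (Gamma k / (b - d) powr k) = gamma_mgf_bound k b d"
    using Gamma_real_pos[OF k] b by (simp add: gamma_mgf_bound_def powr_divide)
  finally show ?thesis .
qed

lemma has_field_derivative_gamma_dens_shape:
  assumes "0 < x" "0 < b" "0 < k"
  shows "((\<lambda>k. gamma_dens k b x) has_field_derivative gamma_dens k b x * (ln b + ln x - Digamma k))
    (at k within S)"
proof -
  have "k \<notin> \<int>\<^sub>\<le>\<^sub>0"
    using assms(3) by (auto elim!: nonpos_Ints_cases)
  moreover have "Gamma k \<noteq> 0"
    using Gamma_real_pos[OF assms(3)] by linarith
  moreover have "gamma_dens k' b x = exp (k' * ln b + (k' - 1) * ln x - b * x) / Gamma k'" for k'
    using assms by (simp add: gamma_dens_def powr_def exp_add exp_diff exp_minus field_simps)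
  ultimately show ?thesis
    by (auto intro!: derivative_eq_intros simp: field_simps power2_eq_square)
qed

lemma has_field_derivative_gamma_dens_rate:
  assumes "0 < x" "0 < b" "0 < k"
  shows "((\<lambda>b. gamma_dens k b x) has_field_derivative gamma_dens k b x * (k / b - x)) (at b within S)"
proof -
  have "Gamma k \<noteq> 0"
    using Gamma_real_pos[OF assms(3)] by linarith
  then show ?thesis
    using assms unfolding gamma_dens_def
    by (auto intro!: derivative_eq_intros simp: field_simps powr_diff)
qed

locale gamma_parameter_box =
  fixes km kp bm bp G D :: real
  assumes km_pos: "0 < km" and km_le_kp: "km \<le> kp" and bm_pos: "0 < bm" and bm_le_bp: "bm \<le> bp"
    and coeff_bound: "\<And>k b. k \<in> {km..kp} \<Longrightarrow> b \<in> {bm..bp} \<Longrightarrow> b powr k / Gamma k \<le> G"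
    and log_deriv_bound: "\<And>k b. k \<in> {km..kp} \<Longrightarrow> b \<in> {bm..bp} \<Longrightarrow> \<bar>ln b - Digamma k\<bar> \<le> D"
begin

definition lipschitz_const :: real where
  "lipschitz_const = G * (D + 2 / km + 1 + kp / bm)"

(* The exponents km/2 - 1 and kp cover every power of x in the parameter derivatives of gamma_dens
   on the box, once |ln x| is bounded by abs_ln_le_powr with s = km/2. *)

definition envelope :: "real \<Rightarrow> real" where
  "envelope x = x powr (km / 2 - 1) + x powr kp"

lemma G_nonneg: "0 \<le> G"
  using coeff_bound[of km bm] Gamma_real_pos[OF km_pos] km_le_kp bm_le_bp
  by (smt (verit) atLeastAtMost_iff divide_nonneg_pos powr_ge_zero)

lemma D_nonneg: "0 \<le> D"
  using log_deriv_bound[of km bm] km_le_kp bm_le_bp by force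

lemma lipschitz_const_nonneg: "0 \<le> lipschitz_const"
  unfolding lipschitz_const_def using G_nonneg D_nonneg km_pos km_le_kp bm_pos by simp

lemma envelope_nonneg: "0 \<le> envelope x"
  by (simp add: envelope_def)

lemma powr_le_envelope: "0 < x \<Longrightarrow> km / 2 - 1 \<le> t \<Longrightarrow> t \<le> kp \<Longrightarrow> x powr t \<le> envelope x"
  unfolding envelope_def by (rule powr_le_powr_add)

definition envelope_integral :: "real \<Rightarrow> real" where
  "envelope_integral e = Gamma (km / 2) / e powr (km / 2) + Gamma (kp + 1) / e powr (kp + 1)"

lemma envelope_integral_nonneg: "0 < e \<Longrightarrow> 0 \<le> envelope_integral e"
  unfolding envelope_integral_def using km_pos km_le_kp by simp

lemma nn_integral_envelope_exp:
  assumes "0 < e"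
  shows "(\<integral>\<^sup>+x\<in>{0..}. ennreal (lipschitz_const * envelope x * exp (- e * x)) \<partial>lborel)
    = ennreal (lipschitz_const * envelope_integral e)"
proof -
  have "(\<integral>\<^sup>+x\<in>{0..}. ennreal (lipschitz_const * envelope x * exp (- e * x)) \<partial>lborel)
      = ennreal lipschitz_const * (\<integral>\<^sup>+x\<in>{0..}. ennreal (envelope x * exp (- e * x)) \<partial>lborel)"
    using lipschitz_const_nonneg by (simp add: nn_integral_cmult ennreal_mult mult.assoc envelope_def)
  also have "\<dots> = ennreal lipschitz_const * ennreal (envelope_integral e)"
    using nn_integral_powr_add_powr_exp[of "km / 2" "kp + 1" e] assms km_pos km_le_kp
    by (simp add: envelope_def envelope_integral_def)
  finally show ?thesis
    using lipschitz_const_nonneg by (simp add: ennreal_mult')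
qed

lemma gamma_dens_le:
  assumes x: "0 < x" and k: "k \<in> {km..kp}" and b: "b \<in> {bm..bp}"
  shows "gamma_dens k b x \<le> G * x powr (k - 1) * exp (- bm * x)"
proof -
  have "gamma_dens k b x = b powr k / Gamma k * x powr (k - 1) * exp (- b * x)"
    using x by (simp add: gamma_dens_def)
  also have "\<dots> \<le> G * x powr (k - 1) * exp (- bm * x)"
    using coeff_bound[OF k b] G_nonneg b x by (intro mult_mono) auto
  finally show ?thesis .
qed

lemma gamma_dens_shape_deriv_bound:
  assumes x: "0 < x" and z: "z \<in> {km..kp}" and b: "b \<in> {bm..bp}"
  shows "\<bar>gamma_dens z b x * (ln b + ln x - Digamma z)\<bar> \<le> lipschitz_const * envelope x * exp (- bm * x)"
proof -
  define s where "s = km / 2"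
  have s: "0 < s"
    unfolding s_def using km_pos by simp
  have log_le: "\<bar>ln b + ln x - Digamma z\<bar> \<le> D + x powr (- s) / s + x"
    using log_deriv_bound[OF z b] abs_ln_le_powr[OF x s] by linarith
  have "x powr (z - 1) * x powr (- s) = x powr (z - s - 1)"
    using powr_add[of x "z - 1" "- s"] by (simp add: algebra_simps)
  moreover have "x powr (z - 1) * x = x powr z"
    using powr_add[of x "z - 1" 1] x by simp
  ultimately have split: "x powr (z - 1) * (D + x powr (- s) / s + x)
      = D * x powr (z - 1) + (1 / s) * x powr (z - s - 1) + x powr z"
    by (simp add: algebra_simps)
  have "x powr (z - 1) \<le> envelope x" "x powr (z - s - 1) \<le> envelope x" "x powr z \<le> envelope x"
    unfolding s_def using x z km_pos by (auto intro!: powr_le_envelope)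
  then have powers_le: "x powr (z - 1) * (D + x powr (- s) / s + x) \<le> (D + 2 / km + 1) * envelope x"
    unfolding split unfolding s_def using D_nonneg km_pos
    by (simp add: distrib_right) (intro add_mono mult_left_mono divide_right_mono; simp)
  have "\<bar>gamma_dens z b x * (ln b + ln x - Digamma z)\<bar> = gamma_dens z b x * \<bar>ln b + ln x - Digamma z\<bar>"
    using z km_pos by (simp add: abs_mult gamma_dens_nonneg)
  also have "\<dots> \<le> (G * x powr (z - 1) * exp (- bm * x)) * (D + x powr (- s) / s + x)"
    using gamma_dens_le[OF x z b] log_le G_nonneg z km_pos
    by (intro mult_mono) (auto simp: gamma_dens_nonneg)
  also have "\<dots> = G * exp (- bm * x) * (x powr (z - 1) * (D + x powr (- s) / s + x))"
    by (simp add: ac_simps)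
  also have "\<dots> \<le> G * exp (- bm * x) * ((D + 2 / km + 1 + kp / bm) * envelope x)"
    using powers_le G_nonneg envelope_nonneg[of x] z km_pos bm_pos
    by (intro mult_left_mono order_trans[OF powers_le] mult_right_mono) auto
  finally show ?thesis
    by (simp add: lipschitz_const_def ac_simps)
qed

lemma gamma_dens_rate_deriv_bound:
  assumes x: "0 < x" and k: "k \<in> {km..kp}" and z: "z \<in> {bm..bp}"
  shows "\<bar>gamma_dens k z x * (k / z - x)\<bar> \<le> lipschitz_const * envelope x * exp (- bm * x)"
proof -
  have "k / z \<le> kp / bm"
    using k z km_pos bm_pos by (intro frac_le) auto
  moreover have "0 \<le> k / z"
    using k z km_pos bm_pos by simp
  ultimately have rate_le: "\<bar>k / z - x\<bar> \<le> kp / bm + x"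
    using x by linarith
  have "x powr (k - 1) * x = x powr k"
    using powr_add[of x "k - 1" 1] x by simp
  then have split: "x powr (k - 1) * (kp / bm + x) = kp / bm * x powr (k - 1) + x powr k"
    by (simp add: algebra_simps)
  have "x powr (k - 1) \<le> envelope x" "x powr k \<le> envelope x"
    using x k km_pos by (auto intro!: powr_le_envelope)
  then have powers_le: "x powr (k - 1) * (kp / bm + x) \<le> (kp / bm + 1) * envelope x"
    unfolding split using k km_pos bm_pos
    by (simp add: distrib_right) (intro add_mono mult_left_mono divide_right_mono; simp)
  have "\<bar>gamma_dens k z x * (k / z - x)\<bar> = gamma_dens k z x * \<bar>k / z - x\<bar>"
    using k km_pos by (simp add: abs_mult gamma_dens_nonneg)
  also have "\<dots> \<le> (G * x powr (k - 1) * exp (- bm * x)) * (kp / bm + x)"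
    using gamma_dens_le[OF x k z] rate_le G_nonneg k km_pos
    by (intro mult_mono) (auto simp: gamma_dens_nonneg)
  also have "\<dots> = G * exp (- bm * x) * (x powr (k - 1) * (kp / bm + x))"
    by (simp add: ac_simps)
  also have "\<dots> \<le> G * exp (- bm * x) * ((D + 2 / km + 1 + kp / bm) * envelope x)"
    using powers_le G_nonneg D_nonneg envelope_nonneg[of x] km_pos
    by (intro mult_left_mono order_trans[OF powers_le] mult_right_mono) auto
  finally show ?thesis
    by (simp add: lipschitz_const_def ac_simps)
qed

lemma gamma_dens_lipschitz:
  assumes x: "0 < x" and k: "k \<in> {km..kp}" "k' \<in> {km..kp}" and b: "b \<in> {bm..bp}" "b' \<in> {bm..bp}"
  shows "\<bar>gamma_dens k b x - gamma_dens k' b' x\<bar>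
    \<le> lipschitz_const * envelope x * exp (- bm * x) * (\<bar>k - k'\<bar> + \<bar>b - b'\<bar>)"
proof -
  define B where "B = lipschitz_const * envelope x * exp (- bm * x)"
  have "norm (gamma_dens k b x - gamma_dens k' b x) \<le> B * norm (k - k')"
  proof (rule field_differentiable_bound[where S = "{km..kp}"])
    fix z assume z: "z \<in> {km..kp}"
    show "((\<lambda>z. gamma_dens z b x) has_field_derivative gamma_dens z b x * (ln b + ln x - Digamma z))
        (at z within {km..kp})"
      using x z b(1) km_pos bm_pos by (intro has_field_derivative_gamma_dens_shape) auto
    show "norm (gamma_dens z b x * (ln b + ln x - Digamma z)) \<le> B"
      unfolding B_def using gamma_dens_shape_deriv_bound[OF x z b(1)] by simp
  qed (use k in auto)
  moreover have "norm (gamma_dens k' b x - gamma_dens k' b' x) \<le> B * norm (b - b')"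
  proof (rule field_differentiable_bound[where S = "{bm..bp}"])
    fix z assume z: "z \<in> {bm..bp}"
    show "((\<lambda>z. gamma_dens k' z x) has_field_derivative gamma_dens k' z x * (k' / z - x))
        (at z within {bm..bp})"
      using x z k km_pos bm_pos by (intro has_field_derivative_gamma_dens_rate) auto
    show "norm (gamma_dens k' z x * (k' / z - x)) \<le> B"
      unfolding B_def using gamma_dens_rate_deriv_bound[OF x k(2) z] by simp
  qed (use b in auto)
  ultimately show ?thesis
    unfolding B_def[symmetric] by (simp add: distrib_left)
qed

lemma exp_gamma_dens_lipschitz:
  assumes "0 < x" "k \<in> {km..kp}" "k' \<in> {km..kp}" "b \<in> {bm..bp}" "b' \<in> {bm..bp}"
  shows "exp (d * x) * \<bar>gamma_dens k b x - gamma_dens k' b' x\<bar>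
    \<le> lipschitz_const * envelope x * exp (- (bm - d) * x) * (\<bar>k - k'\<bar> + \<bar>b - b'\<bar>)"
proof -
  have "exp (d * x) * \<bar>gamma_dens k b x - gamma_dens k' b' x\<bar>
      \<le> exp (d * x) * (lipschitz_const * envelope x * exp (- bm * x) * (\<bar>k - k'\<bar> + \<bar>b - b'\<bar>))"
    using gamma_dens_lipschitz[OF assms] by (rule mult_left_mono) simp
  also have "\<dots> = lipschitz_const * envelope x * exp (- (bm - d) * x) * (\<bar>k - k'\<bar> + \<bar>b - b'\<bar>)"
    by (simp add: left_diff_distrib exp_diff exp_minus field_simps)
  finally show ?thesis .
qed

end

lemma gamma_parameter_box_exists:
  assumes "0 < km" "km \<le> kp" "0 < bm" "bm \<le> bp"
  shows "\<exists>G D. gamma_parameter_box km kp bm bp G D"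
proof -
  let ?box = "{km..kp} \<times> {bm..bp}"
  have "compact ?box"
    by (intro compact_Times compact_Icc)
  have pos: "0 < fst p" "0 < snd p" "fst p \<notin> \<int>\<^sub>\<le>\<^sub>0" "Gamma (fst p) \<noteq> 0" if "p \<in> ?box" for p
    using that assms by (auto simp: Gamma_eq_zero_iff elim!: nonpos_Ints_cases)
  have "continuous_on ?box (\<lambda>p. snd p powr fst p / Gamma (fst p))"
    using pos assms by (intro continuous_at_imp_continuous_on ballI) (auto intro!: continuous_intros)
  then obtain G where G: "\<And>p. p \<in> ?box \<Longrightarrow> norm (snd p powr fst p / Gamma (fst p)) \<le> G"
    using continuous_on_compact_bound[OF \<open>compact ?box\<close>] by blast
  have "continuous_on ?box (\<lambda>p. ln (snd p) - Digamma (fst p))"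
    using pos assms by (intro continuous_at_imp_continuous_on ballI) (auto intro!: continuous_intros)
  then obtain D where D: "\<And>p. p \<in> ?box \<Longrightarrow> norm (ln (snd p) - Digamma (fst p)) \<le> D"
    using continuous_on_compact_bound[OF \<open>compact ?box\<close>] by blast
  have "gamma_parameter_box km kp bm bp G D"
  proof
    fix k b assume "k \<in> {km..kp}" "b \<in> {bm..bp}"
    then have "(k, b) \<in> ?box"
      by simp
    from G[OF this] show "b powr k / Gamma k \<le> G"
      unfolding real_norm_def fst_conv snd_conv by (rule abs_le_D1)
    from D[OF \<open>(k, b) \<in> ?box\<close>] show "\<bar>ln b - Digamma k\<bar> \<le> D"
      by simp
  qed (use assms in auto)
  then show ?thesis
    by blast
qed

lemma gamma_mix_dens_diff_le:
  assumes x: "0 < x" and q: "\<And>m. m \<in> {1..M} \<Longrightarrow> 0 \<le> q m"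
    and shape_pos: "\<And>m. m \<in> {1..M} \<Longrightarrow> 0 < k m"
    and lip: "\<And>m. m \<in> {1..M} \<Longrightarrow>
      exp (\<delta> * x) * \<bar>gamma_dens (k m) (b m) x - gamma_dens (kh m) (bh m) x\<bar> \<le> W x * c m"
  shows "exp (\<delta> * x) * \<bar>gamma_mix_dens M p k b x - gamma_mix_dens M q kh bh x\<bar>
    \<le> (\<Sum>m=1..M. \<bar>p m - q m\<bar> * (exp (\<delta> * x) * gamma_dens (k m) (b m) x) + q m * c m * W x)"
proof -
  define g where "g m = exp (\<delta> * x) * gamma_dens (k m) (b m) x" for m
  define h where "h m = exp (\<delta> * x) * gamma_dens (kh m) (bh m) x" for m
  have "exp (\<delta> * x) * gamma_mix_dens M p k b x = (\<Sum>m=1..M. p m * g m)"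
    "exp (\<delta> * x) * gamma_mix_dens M q kh bh x = (\<Sum>m=1..M. q m * h m)"
    by (simp_all add: gamma_mix_dens_def g_def h_def sum_distrib_left mult.left_commute)
  moreover have "(\<Sum>m=1..M. p m * g m) - (\<Sum>m=1..M. q m * h m)
      = (\<Sum>m=1..M. (p m - q m) * g m) + (\<Sum>m=1..M. q m * (g m - h m))"
    by (simp add: sum_subtractf[symmetric] sum.distrib[symmetric] algebra_simps)
  ultimately have "exp (\<delta> * x) * \<bar>gamma_mix_dens M p k b x - gamma_mix_dens M q kh bh x\<bar>
      = \<bar>(\<Sum>m=1..M. (p m - q m) * g m) + (\<Sum>m=1..M. q m * (g m - h m))\<bar>"
    by (metis abs_exp_cancel abs_mult right_diff_distrib)
  also have "\<dots> \<le> (\<Sum>m=1..M. \<bar>(p m - q m) * g m\<bar>) + (\<Sum>m=1..M. \<bar>q m * (g m - h m)\<bar>)"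
    by (rule order_trans[OF abs_triangle_ineq add_mono[OF sum_abs sum_abs]])
  also have "\<dots> \<le> (\<Sum>m=1..M. \<bar>p m - q m\<bar> * g m) + (\<Sum>m=1..M. q m * c m * W x)"
  proof (intro add_mono sum_mono)
    fix m assume m: "m \<in> {1..M}"
    show "\<bar>(p m - q m) * g m\<bar> \<le> \<bar>p m - q m\<bar> * g m"
      using shape_pos[OF m] by (simp add: g_def abs_mult gamma_dens_nonneg)
    have "\<bar>g m - h m\<bar> = exp (\<delta> * x) * \<bar>gamma_dens (k m) (b m) x - gamma_dens (kh m) (bh m) x\<bar>"
      by (simp add: g_def h_def abs_mult right_diff_distrib[symmetric])
    then show "\<bar>q m * (g m - h m)\<bar> \<le> q m * c m * W x"
      using mult_left_mono[OF lip[OF m] q[OF m]] q[OF m] by (simp add: abs_mult ac_simps)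
  qed
  finally show ?thesis
    by (simp add: g_def sum.distrib)
qed

lemma ennreal_gamma_mix_dens_diff_le:
  assumes q: "\<And>m. m \<in> {1..M} \<Longrightarrow> 0 \<le> q m" and c: "\<And>m. m \<in> {1..M} \<Longrightarrow> 0 \<le> c m"
    and shape_pos: "\<And>m. m \<in> {1..M} \<Longrightarrow> 0 < k m" and W: "\<And>x. 0 \<le> W x"
    and lip: "\<And>m x. m \<in> {1..M} \<Longrightarrow> 0 < x \<Longrightarrow>
      exp (\<delta> * x) * \<bar>gamma_dens (k m) (b m) x - gamma_dens (kh m) (bh m) x\<bar> \<le> W x * c m"
  shows "ennreal (exp (\<delta> * x) * \<bar>gamma_mix_dens M p k b x - gamma_mix_dens M q kh bh x\<bar>)
      * indicator {0..} x
    \<le> (\<Sum>m\<in>{1..M}. ennreal \<bar>p m - q m\<bar> * ennreal (exp (\<delta> * x) * gamma_dens (k m) (b m) x)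
      + ennreal (q m * c m) * (ennreal (W x) * indicator {0..} x))"
proof (cases "0 < x")
  case True
  define g where "g m = exp (\<delta> * x) * gamma_dens (k m) (b m) x" for m
  have nonneg: "0 \<le> g m" "0 \<le> q m * c m" if "m \<in> {1..M}" for m
    using shape_pos[OF that] q[OF that] c[OF that] by (simp_all add: g_def gamma_dens_nonneg)
  have "ennreal (exp (\<delta> * x) * \<bar>gamma_mix_dens M p k b x - gamma_mix_dens M q kh bh x\<bar>)
      \<le> ennreal (\<Sum>m=1..M. \<bar>p m - q m\<bar> * g m + q m * c m * W x)"
    unfolding g_def using True q shape_pos lip by (intro ennreal_leI gamma_mix_dens_diff_le) auto
  also have "\<dots> = (\<Sum>m\<in>{1..M}. ennreal (\<bar>p m - q m\<bar> * g m + q m * c m * W x))"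
    using nonneg W by (intro sum_ennreal[symmetric]) auto
  also have "\<dots> = (\<Sum>m\<in>{1..M}. ennreal \<bar>p m - q m\<bar> * ennreal (g m) + ennreal (q m * c m) * ennreal (W x))"
    using nonneg W by (intro sum.cong refl) (simp add: ennreal_plus ennreal_mult)
  finally show ?thesis
    using True by (simp add: g_def)
qed (simp add: gamma_mix_dens_def gamma_dens_def indicator_def)

lemma weighted_tv_gamma_mix_le:
  fixes W :: "real \<Rightarrow> real"
  assumes q: "\<And>m. m \<in> {1..M} \<Longrightarrow> 0 \<le> q m"
    and params: "\<And>m. m \<in> {1..M} \<Longrightarrow> 0 < k m \<and> 0 < b m \<and> \<delta> < b m"
    and W: "W \<in> borel_measurable borel" "\<And>x. 0 \<le> W x"
    and W_int: "(\<integral>\<^sup>+x\<in>{0..}. ennreal (W x) \<partial>lborel) \<le> ennreal I" and I: "0 \<le> I"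
    and lip: "\<And>m x. m \<in> {1..M} \<Longrightarrow> 0 < x \<Longrightarrow>
      exp (\<delta> * x) * \<bar>gamma_dens (k m) (b m) x - gamma_dens (kh m) (bh m) x\<bar>
        \<le> W x * (\<bar>k m - kh m\<bar> + \<bar>b m - bh m\<bar>)"
  shows "weighted_tv_dens \<delta> (gamma_mix_dens M p k b) (gamma_mix_dens M q kh bh)
    \<le> ennreal ((\<Sum>m=1..M. \<bar>p m - q m\<bar> * gamma_mgf_bound (k m) (b m) \<delta>)
      + (\<Sum>m=1..M. q m * (I * \<bar>k m - kh m\<bar> + I * \<bar>b m - bh m\<bar>)))"
proof -
  define c where "c m = \<bar>k m - kh m\<bar> + \<bar>b m - bh m\<bar>" for m
  define g where "g m x = exp (\<delta> * x) * gamma_dens (k m) (b m) x" for m x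
  have qc_nonneg: "0 \<le> q m * c m" if "m \<in> {1..M}" for m
    using q[OF that] by (simp add: c_def)
  have "weighted_tv_dens \<delta> (gamma_mix_dens M p k b) (gamma_mix_dens M q kh bh)
      \<le> (\<integral>\<^sup>+x. (\<Sum>m\<in>{1..M}. ennreal \<bar>p m - q m\<bar> * ennreal (g m x)
          + ennreal (q m * c m) * (ennreal (W x) * indicator {0..} x)) \<partial>lborel)"
    unfolding weighted_tv_dens_def g_def c_def using q params W(2) lip
    by (intro nn_integral_mono ennreal_gamma_mix_dens_diff_le) auto
  also have "\<dots> = (\<Sum>m\<in>{1..M}. ennreal \<bar>p m - q m\<bar> * (\<integral>\<^sup>+x. ennreal (g m x) \<partial>lborel)
      + ennreal (q m * c m) * (\<integral>\<^sup>+x\<in>{0..}. ennreal (W x) \<partial>lborel))"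
    using W(1) by (simp add: g_def nn_integral_sum nn_integral_add nn_integral_cmult)
  also have "\<dots> \<le> (\<Sum>m\<in>{1..M}. ennreal (\<bar>p m - q m\<bar> * gamma_mgf_bound (k m) (b m) \<delta>)
      + ennreal (q m * c m * I))"
  proof (intro sum_mono add_mono)
    fix m assume m: "m \<in> {1..M}"
    show "ennreal \<bar>p m - q m\<bar> * (\<integral>\<^sup>+x. ennreal (g m x) \<partial>lborel)
        \<le> ennreal (\<bar>p m - q m\<bar> * gamma_mgf_bound (k m) (b m) \<delta>)"
      using params[OF m]
      by (simp add: g_def nn_integral_exp_gamma_dens ennreal_mult gamma_mgf_bound_def)
    show "ennreal (q m * c m) * (\<integral>\<^sup>+x\<in>{0..}. ennreal (W x) \<partial>lborel) \<le> ennreal (q m * c m * I)"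
      using W_int qc_nonneg[OF m] I by (simp add: ennreal_mult mult_left_mono)
  qed
  also have "\<dots> = (\<Sum>m\<in>{1..M}.
      ennreal (\<bar>p m - q m\<bar> * gamma_mgf_bound (k m) (b m) \<delta> + q m * c m * I))"
    using qc_nonneg I by (intro sum.cong refl ennreal_plus[symmetric]) (auto simp: gamma_mgf_bound_def)
  also have "\<dots> = ennreal (\<Sum>m=1..M. \<bar>p m - q m\<bar> * gamma_mgf_bound (k m) (b m) \<delta> + q m * c m * I)"
    using qc_nonneg I by (intro sum_ennreal) (auto simp: gamma_mgf_bound_def)
  also have "\<dots> = ennreal ((\<Sum>m=1..M. \<bar>p m - q m\<bar> * gamma_mgf_bound (k m) (b m) \<delta>)
      + (\<Sum>m=1..M. q m * (I * \<bar>k m - kh m\<bar> + I * \<bar>b m - bh m\<bar>)))"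
    by (simp add: sum.distrib c_def algebra_simps)
  finally show ?thesis .
qed

theorem mainTheorem9:
  fixes \<delta> km kp bm bp :: real
  assumes "0 < \<delta>" and "0 < km" and "km \<le> kp" and "\<delta> < bm" and "bm \<le> bp"
  shows "\<exists>Ck Cb :: real. \<forall>(M::nat) (\<pi> :: 'l \<Rightarrow> nat \<Rightarrow> real) (\<pi>h :: 'l \<Rightarrow> nat \<Rightarrow> real)
           (k :: nat \<Rightarrow> real) (b :: nat \<Rightarrow> real) (kh :: nat \<Rightarrow> real) (bh :: nat \<Rightarrow> real) (l::'l).
     (\<forall>m\<in>{1..M}. 0 \<le> \<pi> l m \<and> 0 \<le> \<pi>h l m) \<and>
     (\<Sum>m=1..M. \<pi> l m) = 1 \<and> (\<Sum>m=1..M. \<pi>h l m) = 1 \<and>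
     (\<forall>m\<in>{1..M}. k m \<in> {km..kp} \<and> b m \<in> {bm..bp} \<and> kh m \<in> {km..kp} \<and> bh m \<in> {bm..bp})
     \<longrightarrow> weighted_tv_dens \<delta> (gamma_mix_dens M (\<pi> l) k b) (gamma_mix_dens M (\<pi>h l) kh bh)
         \<le> ennreal ((\<Sum>m=1..M. \<bar>\<pi> l m - \<pi>h l m\<bar> * gamma_mgf_bound (k m) (b m) \<delta>)
                  + (\<Sum>m=1..M. \<pi>h l m * (Ck * \<bar>k m - kh m\<bar> + Cb * \<bar>b m - bh m\<bar>)))"
proof -
  obtain G D where "gamma_parameter_box km kp bm bp G D"
    using gamma_parameter_box_exists assms by fastforce
  then interpret gamma_parameter_box km kp bm bp G D .
  define W where "W x = lipschitz_const * envelope x * exp (- (bm - \<delta>) * x)" for x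
  define C where "C = lipschitz_const * envelope_integral (bm - \<delta>)"
  have "(\<integral>\<^sup>+x\<in>{0..}. ennreal (W x) \<partial>lborel) = ennreal C"
    unfolding W_def C_def using assms by (intro nn_integral_envelope_exp) simp
  moreover have "0 \<le> C"
    unfolding C_def using lipschitz_const_nonneg envelope_integral_nonneg assms by simp
  moreover have "0 \<le> W x" for x
    unfolding W_def using lipschitz_const_nonneg envelope_nonneg by simp
  moreover have "W \<in> borel_measurable borel"
    unfolding W_def envelope_def by measurable
  moreover have
    "exp (\<delta> * x) * \<bar>gamma_dens k b x - gamma_dens k' b' x\<bar> \<le> W x * (\<bar>k - k'\<bar> + \<bar>b - b'\<bar>)"
    if "0 < x" "k \<in> {km..kp}" "k' \<in> {km..kp}" "b \<in> {bm..bp}" "b' \<in> {bm..bp}" for x k k' b b'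
    unfolding W_def using exp_gamma_dens_lipschitz[OF that] .
  ultimately show ?thesis
    using assms
    by (intro exI[of _ C] allI impI weighted_tv_gamma_mix_le[where W = W]) fastforce+
qed

end
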